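(* Assume Assumption 1, Assumption 2 and the null hypothesis $H_0:\ T_i(1)=T_i(0)$ for all $i$, and condition on $\boldsymbol{T}(1),\boldsymbol{T}(0)$. Then for each $1\le k\le K$, $$\mathbb{E}\Big(\frac{\mathbb{1}(V_k>0)}{V_k}\ \Big|\ \boldsymbol{T}(1),\boldsymbol{T}(0)\Big)\le\frac{16}{g_k\phi_k(1-\phi_k)}\cdot\frac{1+2n_k^{-1}}{(h_k+n_k^{-1})(1-h_k+n_k^{-1})}\cdot\frac{1}{n_k}.$$
   Context: There are $n$ units. Unit $i$ has potential event times $T_i(1),T_i(0)\ge 0$, potential censoring times $C_i(1),C_i(0)\in[0,\infty]$, and treatment indicator $Z_i\in\{0,1\}$; bold letters denote $n$-vectors. Assumption 1: conditional on $\boldsymbol{T}(1),\boldsymbol{T}(0),\boldsymbol{C}(1),\boldsymbol{C}(0)$, the $Z_i$ are i.i.d. Bernoulli$(p_1)$, $p_1=1-p_0\in(0,1)$. Assumption 2: $(\boldsymbol{C}(1),\boldsymbol{C}(0))$ is independent of $(\boldsymbol{T}(1),\boldsymbol{T}(0))$ and the pairs $(C_i(1),C_i(0))$ are i.i.d. across $i$. $G_z(c)=\Pr(C_i(z)\ge c)$, $G(t)=p_1G_1(t)+p_0G_0(t)$. Realized: $W_i=\min\{T_i,C_i\}$, $\Delta_i=\mathbb{1}(T_i\le C_i)$ with $T_i=Z_iT_i(1)+(1-Z_i)T_i(0)$, $C_i=Z_iC_i(1)+(1-Z_i)C_i(0)$. Let $t_1<\dots<t_K$ be the distinct values of $\{T_i(0)\}$,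 $d_k=\#\{i:T_i(0)=t_k\}$, $n_k=\#\{i:T_i(0)\ge t_k\}$, $h_k=d_k/n_k$, $g_k=G(t_k)$, $\phi_k=p_1G_1(t_k)/G(t_k)$; $N_{1k},N_{0k}$ the numbers of treated / control units with $W_i\ge t_k$, $N_k=N_{1k}+N_{0k}$, $D_k=\sum_i\Delta_i\mathbb{1}(W_i=t_k)$, $V_k=D_k(N_k-D_k)N_{1k}N_{0k}/\{N_k^2(N_k-1)\}$ (convention $0/0:=0$). *)

theory Defs
  imports "HOL-Probability.Probability"
begin

text \<open>A sample point: for each unit i, (Z_i, (C_i(1), C_i(0))).
  Censoring times live in [0,\<infinity>], rendered as ennreal.\<close>
type_synonym sample = "nat \<Rightarrow> bool \<times> (ennreal \<times> ennreal)"

text \<open>Probability space conditional on T(1),T(0): the pairs (Z_i,(C_i(1),C_i(0)))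
  are i.i.d., Z_i ~ Bernoulli(p1) independent of the censoring pair with law mu.\<close>
definition unit_space :: "real \<Rightarrow> (ennreal \<times> ennreal) measure \<Rightarrow> (bool \<times> (ennreal \<times> ennreal)) measure" where
  "unit_space p1 \<mu> = measure_pmf (bernoulli_pmf p1) \<Otimes>\<^sub>M \<mu>"

definition sample_space :: "nat \<Rightarrow> real \<Rightarrow> (ennreal \<times> ennreal) measure \<Rightarrow> sample measure" where
  "sample_space n p1 \<mu> = PiM {..<n} (\<lambda>_. unit_space p1 \<mu>)"

definition Zr :: "sample \<Rightarrow> nat \<Rightarrow> bool" where
  "Zr \<omega> i = fst (\<omega> i)"

definition Cr :: "sample \<Rightarrow> nat \<Rightarrow> ennreal" where
  "Cr \<omega> i = (if Zr \<omega> i then fst (snd (\<omega> i)) else snd (snd (\<omega> i)))"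

definition Tr :: "(nat \<Rightarrow> real) \<Rightarrow> (nat \<Rightarrow> real) \<Rightarrow> sample \<Rightarrow> nat \<Rightarrow> real" where
  "Tr T1 T0 \<omega> i = (if Zr \<omega> i then T1 i else T0 i)"

definition Wr :: "(nat \<Rightarrow> real) \<Rightarrow> (nat \<Rightarrow> real) \<Rightarrow> sample \<Rightarrow> nat \<Rightarrow> ennreal" where
  "Wr T1 T0 \<omega> i = min (ennreal (Tr T1 T0 \<omega> i)) (Cr \<omega> i)"

definition Deltar :: "(nat \<Rightarrow> real) \<Rightarrow> (nat \<Rightarrow> real) \<Rightarrow> sample \<Rightarrow> nat \<Rightarrow> bool" where
  "Deltar T1 T0 \<omega> i = (ennreal (Tr T1 T0 \<omega> i) \<le> Cr \<omega> i)"

definition N1 :: "nat \<Rightarrow> (nat \<Rightarrow> real) \<Rightarrow> (nat \<Rightarrow> real) \<Rightarrow> real \<Rightarrow> sample \<Rightarrow> nat" where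
  "N1 n T1 T0 t \<omega> = card {i. i < n \<and> Zr \<omega> i \<and> ennreal t \<le> Wr T1 T0 \<omega> i}"

definition N0 :: "nat \<Rightarrow> (nat \<Rightarrow> real) \<Rightarrow> (nat \<Rightarrow> real) \<Rightarrow> real \<Rightarrow> sample \<Rightarrow> nat" where
  "N0 n T1 T0 t \<omega> = card {i. i < n \<and> \<not> Zr \<omega> i \<and> ennreal t \<le> Wr T1 T0 \<omega> i}"

definition Dk :: "nat \<Rightarrow> (nat \<Rightarrow> real) \<Rightarrow> (nat \<Rightarrow> real) \<Rightarrow> real \<Rightarrow> sample \<Rightarrow> nat" where
  "Dk n T1 T0 t \<omega> = card {i. i < n \<and> Deltar T1 T0 \<omega> i \<and> Wr T1 T0 \<omega> i = ennreal t}"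

text \<open>V_k; Isabelle's x/0 = 0 matches the convention 0/0 := 0.\<close>
definition Vk :: "nat \<Rightarrow> (nat \<Rightarrow> real) \<Rightarrow> (nat \<Rightarrow> real) \<Rightarrow> real \<Rightarrow> sample \<Rightarrow> real" where
  "Vk n T1 T0 t \<omega> =
     (let D = real (Dk n T1 T0 t \<omega>); a = real (N1 n T1 T0 t \<omega>); b = real (N0 n T1 T0 t \<omega>);
          N = a + b
      in D * (N - D) * a * b / (N\<^sup>2 * (N - 1)))"

definition G1 :: "(ennreal \<times> ennreal) measure \<Rightarrow> real \<Rightarrow> real" where
  "G1 \<mu> c = measure \<mu> {x \<in> space \<mu>. ennreal c \<le> fst x}"

definition G0 :: "(ennreal \<times> ennreal) measure \<Rightarrow> real \<Rightarrow> real" where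
  "G0 \<mu> c = measure \<mu> {x \<in> space \<mu>. ennreal c \<le> snd x}"

definition Gmix :: "real \<Rightarrow> (ennreal \<times> ennreal) measure \<Rightarrow> real \<Rightarrow> real" where
  "Gmix p1 \<mu> c = p1 * G1 \<mu> c + (1 - p1) * G0 \<mu> c"

definition phik :: "real \<Rightarrow> (ennreal \<times> ennreal) measure \<Rightarrow> real \<Rightarrow> real" where
  "phik p1 \<mu> c = p1 * G1 \<mu> c / Gmix p1 \<mu> c"

definition dk :: "nat \<Rightarrow> (nat \<Rightarrow> real) \<Rightarrow> real \<Rightarrow> nat" where
  "dk n T0 t = card {i. i < n \<and> T0 i = t}"

definition nk :: "nat \<Rightarrow> (nat \<Rightarrow> real) \<Rightarrow> real \<Rightarrow> nat" where
  "nk n T0 t = card {i. i < n \<and> t \<le> T0 i}"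

definition hk :: "nat \<Rightarrow> (nat \<Rightarrow> real) \<Rightarrow> real \<Rightarrow> real" where
  "hk n T0 t = real (dk n T0 t) / real (nk n T0 t)"

end

theory Submission
  imports Defs
begin

(*
  Under H0 the event times do not depend on treatment, so V_k is a function of the status of each
  unit at t_k alone: under observation and treated, under observation and control, or not under
  observation. These statuses are i.i.d., and each can be generated as a risk indicator
  R_i ~ Bernoulli(g_k) followed by an independent treatment indicator Z_i ~ Bernoulli(phi_k) that
  only matters when R_i holds.

  Let D and M be the numbers of units at risk with T_i(0) = t_k and with T_i(0) > t_k, and a, b the
  numbers of treated and control units at risk, so that D + M = a + b = N. Then
  1/V_k = N^2 (N - 1) / (D M a b) <= 4 (1/(D+1) + 1/(M+1)) (N+1) (1/(a+1) + 1/(b+1)).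
  Given R, a is Binomial(N, phi_k), and E[1/(X+1)] <= 1/((m+1) p) for X ~ Binomial(m, p) bounds the
  conditional expectation of the second factor by 1/(phi_k (1 - phi_k)). D and M are binomial with
  success probability g_k, so the first factor has expectation at most
  (1/(d_k+1) + 1/(n_k-d_k+1)) / g_k, which is the expression in h_k and n_k of the statement.
  The argument gives the constant 4 in place of 16.
*)

section \<open>Inverse moments of binomial counts\<close>

lemma expectation_binomial_inverse_Suc_le:
  assumes "0 < p" "p \<le> 1"
  shows "measure_pmf.expectation (binomial_pmf N p) (\<lambda>k. 1 / (real k + 1)) \<le> 1 / ((real N + 1) * p)"
proof -
  \<comment> \<open>\<open>C(N,k)/(k+1) = C(N+1,k+1)/(N+1)\<close> turns the sum into part of the binomial
    expansion of \<open>(p + (1 - p))^(N+1)\<close>.\<close>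
  have term_eq: "pmf (binomial_pmf N p) k * (1 / (real k + 1))
      = real (Suc N choose Suc k) * p ^ Suc k * (1 - p) ^ (Suc N - Suc k) / ((real N + 1) * p)" for k
  proof -
    have "real (Suc N) * real (N choose k) = real (Suc N choose Suc k) * real (Suc k)"
      by (metis Suc_times_binomial_eq of_nat_mult)
    then have choose_eq: "real (N choose k) / (real k + 1) = real (Suc N choose Suc k) / (real N + 1)"
      by (simp add: field_simps del: binomial_Suc_Suc)
    have "pmf (binomial_pmf N p) k * (1 / (real k + 1))
        = real (N choose k) / (real k + 1) * p ^ k * (1 - p) ^ (N - k)"
      using assms by simp
    also have "\<dots> = real (Suc N choose Suc k) * (p * p ^ k) * (1 - p) ^ (N - k) / ((real N + 1) * p)"
      unfolding choose_eq using assms by simp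
    finally show ?thesis
      by simp
  qed
  have "measure_pmf.expectation (binomial_pmf N p) (\<lambda>k. 1 / (real k + 1))
      = (\<Sum>k\<le>N. pmf (binomial_pmf N p) k * (1 / (real k + 1)))"
    using assms by (subst integral_measure_pmf[where A = "{..N}"]) (auto simp: set_pmf_binomial_eq split: if_splits)
  also have "\<dots> = (\<Sum>k\<le>N. real (Suc N choose Suc k) * p ^ Suc k * (1 - p) ^ (Suc N - Suc k))
                  / ((real N + 1) * p)"
    unfolding term_eq by (simp add: sum_divide_distrib)
  also have "\<dots> \<le> (\<Sum>k\<le>Suc N. real (Suc N choose k) * p ^ k * (1 - p) ^ (Suc N - k)) / ((real N + 1) * p)"
    using assms by (intro divide_right_mono) (subst sum.atMost_Suc_shift[where n = N], simp_all)
  also have "\<dots> = 1 / ((real N + 1) * p)"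
    using binomial_ring[of p "1 - p" "Suc N"] by simp
  finally show ?thesis .
qed

lemma integrable_Pi_pmf_finite:
  fixes p :: "'i \<Rightarrow> 'a :: finite pmf" and f :: "('i \<Rightarrow> 'a) \<Rightarrow> real"
  assumes "finite I"
  shows "integrable (measure_pmf (Pi_pmf I dflt p)) f"
  using assms
  by (intro integrable_measure_pmf_finite finite_subset[OF set_Pi_pmf_subset']) (auto intro!: finite_PiE_dflt)

lemma expectation_Pi_bernoulli_count_inverse_le:
  assumes "finite I" "S \<subseteq> I" "0 < p" "p \<le> 1"
  shows "measure_pmf.expectation (Pi_pmf I dflt (\<lambda>_. bernoulli_pmf p))
           (\<lambda>f. 1 / (real (card {i\<in>S. f i}) + 1))
         \<le> 1 / ((real (card S) + 1) * p)"
proof -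
  have "map_pmf (\<lambda>f. card {i\<in>S. f i}) (Pi_pmf I dflt (\<lambda>_. bernoulli_pmf p))
      = map_pmf (\<lambda>f. card {i\<in>S. f i}) (Pi_pmf S dflt (\<lambda>_. bernoulli_pmf p))"
    using assms(1,2) by (simp add: Pi_pmf_subset[of I S] map_pmf_comp cong: conj_cong)
  also have "\<dots> = binomial_pmf (card S) p"
    using assms by (intro binomial_pmf_altdef'[symmetric]) (auto intro: finite_subset)
  finally have count_binomial: "map_pmf (\<lambda>f. card {i\<in>S. f i}) (Pi_pmf I dflt (\<lambda>_. bernoulli_pmf p))
      = binomial_pmf (card S) p" .
  show ?thesis
    using expectation_binomial_inverse_Suc_le[of p "card S"] assms
    by (simp flip: count_binomial)
qed

lemma map_pmf_Not_bernoulli_pmf: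
  assumes "0 \<le> p" "p \<le> 1"
  shows "map_pmf Not (bernoulli_pmf p) = bernoulli_pmf (1 - p)"
proof (rule pmf_eqI)
  fix b
  have "pmf (map_pmf Not (bernoulli_pmf p)) (\<not> \<not> b) = pmf (bernoulli_pmf p) (\<not> b)"
    by (rule pmf_map_inj') (simp add: inj_def)
  with assms show "pmf (map_pmf Not (bernoulli_pmf p)) b = pmf (bernoulli_pmf (1 - p)) b"
    by (cases b) auto
qed

lemma expectation_Pi_bernoulli_count_not_inverse_le:
  assumes "finite I" "S \<subseteq> I" "0 \<le> p" "p < 1"
  shows "measure_pmf.expectation (Pi_pmf I dflt (\<lambda>_. bernoulli_pmf p))
           (\<lambda>f. 1 / (real (card {i\<in>S. \<not> f i}) + 1))
         \<le> 1 / ((real (card S) + 1) * (1 - p))"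
proof -
  have "Pi_pmf I dflt (\<lambda>_. bernoulli_pmf p) = Pi_pmf I dflt (\<lambda>_. map_pmf Not (bernoulli_pmf (1 - p)))"
    using assms by (simp add: map_pmf_Not_bernoulli_pmf)
  also have "\<dots> = map_pmf (\<lambda>f. Not \<circ> f) (Pi_pmf I (\<not> dflt) (\<lambda>_. bernoulli_pmf (1 - p)))"
    using assms by (intro Pi_pmf_map) auto
  finally show ?thesis
    using assms expectation_Pi_bernoulli_count_inverse_le[of I S "1 - p" "\<not> dflt"] by simp
qed

lemma expectation_Pi_bernoulli_count_inverse_add_le:
  assumes "finite I" "S \<subseteq> I" "S' \<subseteq> I" "0 < p" "p \<le> 1"
  shows "measure_pmf.expectation (Pi_pmf I dflt (\<lambda>_. bernoulli_pmf p))
           (\<lambda>f. 1 / (real (card {i\<in>S. f i}) + 1) + 1 / (real (card {i\<in>S'. f i}) + 1))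
         \<le> 1 / p * (1 / (real (card S) + 1) + 1 / (real (card S') + 1))"
proof -
  have "measure_pmf.expectation (Pi_pmf I dflt (\<lambda>_. bernoulli_pmf p))
          (\<lambda>f. 1 / (real (card {i\<in>S. f i}) + 1) + 1 / (real (card {i\<in>S'. f i}) + 1))
      \<le> 1 / ((real (card S) + 1) * p) + 1 / ((real (card S') + 1) * p)"
    using assms by (simp add: integrable_Pi_pmf_finite add_mono expectation_Pi_bernoulli_count_inverse_le)
  also have "\<dots> = 1 / p * (1 / (real (card S) + 1) + 1 / (real (card S') + 1))"
    by (simp add: distrib_left mult.commute)
  finally show ?thesis .
qed

lemma expectation_Pi_bernoulli_count_inverse_both_le:
  assumes "finite I" "S \<subseteq> I" "0 < p" "p < 1"
  shows "measure_pmf.expectation (Pi_pmf I dflt (\<lambda>_. bernoulli_pmf p))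
           (\<lambda>f. (real (card S) + 1) * (1 / (real (card {i\<in>S. f i}) + 1) + 1 / (real (card {i\<in>S. \<not> f i}) + 1)))
         \<le> 1 / (p * (1 - p))"
proof -
  have "measure_pmf.expectation (Pi_pmf I dflt (\<lambda>_. bernoulli_pmf p))
          (\<lambda>f. (real (card S) + 1) * (1 / (real (card {i\<in>S. f i}) + 1) + 1 / (real (card {i\<in>S. \<not> f i}) + 1)))
      \<le> (real (card S) + 1) * (1 / ((real (card S) + 1) * p) + 1 / ((real (card S) + 1) * (1 - p)))"
    using assms by (simp add: integrable_Pi_pmf_finite mult_left_mono add_mono
        expectation_Pi_bernoulli_count_inverse_le expectation_Pi_bernoulli_count_not_inverse_le)
  also have "\<dots> = 1 / p + 1 / (1 - p)"
    by (simp add: distrib_left)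
  also have "\<dots> = 1 / (p * (1 - p))"
    using assms by (simp add: field_simps)
  finally show ?thesis .
qed

section \<open>The hypergeometric variance of the log-rank statistic\<close>

lemma inverse_hypergeometric_variance_le:
  fixes D M a b :: real
  assumes "1 \<le> D" "1 \<le> M" "1 \<le> a" "1 \<le> b" "D + M = a + b"
  shows "(a + b)\<^sup>2 * (a + b - 1) / (D * M * a * b)
         \<le> 4 * (1 / (D + 1) + 1 / (M + 1)) * ((a + b + 1) * (1 / (a + 1) + 1 / (b + 1)))"
proof -
  have inverse_le: "1 / x \<le> 2 * (1 / (x + 1))" if "1 \<le> x" for x :: real
    using that by (simp add: field_simps)
  have "(a + b) / (D * M) = 1 / D + 1 / M"
    using assms by (simp add: field_simps)
  also have "\<dots> \<le> 2 * (1 / (D + 1) + 1 / (M + 1))"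
    using assms inverse_le[of D] inverse_le[of M] by simp
  finally have DM_le: "(a + b) / (D * M) \<le> 2 * (1 / (D + 1) + 1 / (M + 1))" .
  have "(a + b) * (a + b - 1) / (a * b) \<le> (a + b + 1) * (1 / a + 1 / b)"
    using assms by (simp add: field_simps)
  also have "\<dots> \<le> (a + b + 1) * (2 * (1 / (a + 1) + 1 / (b + 1)))"
    using assms inverse_le[of a] inverse_le[of b] by (intro mult_left_mono) auto
  finally have ab_le: "(a + b) * (a + b - 1) / (a * b) \<le> (a + b + 1) * (2 * (1 / (a + 1) + 1 / (b + 1)))" .
  have "(a + b)\<^sup>2 * (a + b - 1) / (D * M * a * b) = (a + b) / (D * M) * ((a + b) * (a + b - 1) / (a * b))"
    by (simp add: power2_eq_square)
  also have "\<dots> \<le> 2 * (1 / (D + 1) + 1 / (M + 1)) * ((a + b + 1) * (2 * (1 / (a + 1) + 1 / (b + 1))))"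
    using assms DM_le ab_le by (intro mult_mono) auto
  also have "\<dots> = 4 * (1 / (D + 1) + 1 / (M + 1)) * ((a + b + 1) * (1 / (a + 1) + 1 / (b + 1)))"
    by algebra
  finally show ?thesis .
qed

definition risk_mark :: "bool \<Rightarrow> bool \<Rightarrow> bool option" where
  "risk_mark r z = (if r then Some z else None)"

(*
  x i = Some z: unit i is still under observation at the current time, with treatment indicator z;
  x i = None: it is not. With A the units whose event time is t_k and K the risk set, D, a and b
  below are D_k, N_1k and N_0k.
*)
definition logrank_variance :: "'i set \<Rightarrow> 'i set \<Rightarrow> ('i \<Rightarrow> bool option) \<Rightarrow> real" where
  "logrank_variance A K x =
     (let D = real (card {i\<in>A. x i \<noteq> None});
          a = real (card {i\<in>K. x i = Some True}); b = real (card {i\<in>K. x i = Some False});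
          N = a + b
      in D * (N - D) * a * b / (N\<^sup>2 * (N - 1)))"

lemma logrank_variance_cong:
  assumes "A \<subseteq> K" "\<And>i. i \<in> K \<Longrightarrow> x i = y i"
  shows "logrank_variance A K x = logrank_variance A K y"
proof -
  have "{i\<in>A. x i \<noteq> None} = {i\<in>A. y i \<noteq> None}" "{i\<in>K. x i = Some b} = {i\<in>K. y i = Some b}" for b
    using assms by auto
  then show ?thesis
    unfolding logrank_variance_def by simp
qed

definition inverse_if_pos :: "real \<Rightarrow> real" where
  "inverse_if_pos v = (if 0 < v then 1 / v else 0)"

lemma inverse_if_pos_nonneg: "0 \<le> inverse_if_pos v"
  by (simp add: inverse_if_pos_def)

lemma inverse_if_pos_logrank_variance_le:
  assumes "finite K" "A \<subseteq> K" "\<forall>i\<in>K. x i = risk_mark (R i) (Z i)"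
  shows "inverse_if_pos (logrank_variance A K x)
     \<le> 4 * (1 / (real (card {i\<in>A. R i}) + 1) + 1 / (real (card {i\<in>K - A. R i}) + 1))
       * ((real (card {i\<in>K. R i}) + 1)
          * (1 / (real (card {i\<in>K. R i \<and> Z i}) + 1) + 1 / (real (card {i\<in>K. R i \<and> \<not> Z i}) + 1)))"
    (is "_ \<le> ?bound")
proof -
  define D where "D = real (card {i\<in>A. R i})"
  define M where "M = real (card {i\<in>K - A. R i})"
  define a where "a = real (card {i\<in>K. R i \<and> Z i})"
  define b where "b = real (card {i\<in>K. R i \<and> \<not> Z i})"
  have "finite A"
    using assms(1,2) by (rule finite_subset[rotated])
  then have "card {i\<in>A. R i} + card {i\<in>K - A. R i} = card {i\<in>K. R i}"
    using assms(1,2) by (subst card_Un_disjoint[symmetric]) (auto intro!: arg_cong[where f = card])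
  moreover have "card {i\<in>K. R i \<and> Z i} + card {i\<in>K. R i \<and> \<not> Z i} = card {i\<in>K. R i}"
    using assms(1) by (subst card_Un_disjoint[symmetric]) (auto intro!: arg_cong[where f = card])
  ultimately have counts: "D + M = a + b" "real (card {i\<in>K. R i}) = a + b"
    unfolding D_def M_def a_def b_def by (simp_all flip: of_nat_add)
  have variance_eq: "logrank_variance A K x = D * M * a * b / ((a + b)\<^sup>2 * (a + b - 1))"
  proof -
    have "{i\<in>A. x i \<noteq> None} = {i\<in>A. R i}" "{i\<in>K. x i = Some True} = {i\<in>K. R i \<and> Z i}"
      "{i\<in>K. x i = Some False} = {i\<in>K. R i \<and> \<not> Z i}"
      using assms(2,3) by (auto simp: risk_mark_def split: if_splits)
    moreover have "a + b - D = M"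
      using counts by simp
    ultimately show ?thesis
      unfolding logrank_variance_def Let_def D_def a_def b_def by simp
  qed
  have bound_eq: "?bound = 4 * (1 / (D + 1) + 1 / (M + 1)) * ((a + b + 1) * (1 / (a + 1) + 1 / (b + 1)))"
    unfolding counts(2) by (simp add: D_def M_def a_def b_def)
  show ?thesis
  proof (cases "0 < logrank_variance A K x")
    case True
    then have "D \<noteq> 0" "M \<noteq> 0" "a \<noteq> 0" "b \<noteq> 0"
      unfolding variance_eq by auto
    then have "1 \<le> D" "1 \<le> M" "1 \<le> a" "1 \<le> b"
      unfolding D_def M_def a_def b_def by auto
    then show ?thesis
      unfolding bound_eq using inverse_hypergeometric_variance_le[OF _ _ _ _ counts(1)]
      by (simp add: inverse_if_pos_def variance_eq)
  qed (simp add: inverse_if_pos_def)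
qed

section \<open>Expected inverse variance under i.i.d. risk statuses\<close>

(* In this form the product over units splits into independent risk and treatment indicators. *)
definition risk_status_pmf :: "real \<Rightarrow> real \<Rightarrow> bool option pmf" where
  "risk_status_pmf g \<phi> = do {r \<leftarrow> bernoulli_pmf g; z \<leftarrow> bernoulli_pmf \<phi>; return_pmf (risk_mark r z)}"

lemma pmf_risk_status_pmf:
  assumes "0 \<le> g" "g \<le> 1" "0 \<le> \<phi>" "\<phi> \<le> 1"
  shows "pmf (risk_status_pmf g \<phi>) (Some z) = g * pmf (bernoulli_pmf \<phi>) z"
    and "pmf (risk_status_pmf g \<phi>) None = 1 - g"
  using assms by (simp_all add: risk_status_pmf_def pmf_bind risk_mark_def indicator_def of_bool_def)

lemma Pi_risk_status_pmf:
  assumes "finite I"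
  shows "Pi_pmf I None (\<lambda>_. risk_status_pmf g \<phi>) =
    do {R \<leftarrow> Pi_pmf I False (\<lambda>_. bernoulli_pmf g); Z \<leftarrow> Pi_pmf I False (\<lambda>_. bernoulli_pmf \<phi>);
        return_pmf (\<lambda>i. risk_mark (R i) (Z i))}"
proof -
  have "Pi_pmf I None (\<lambda>_. risk_status_pmf g \<phi>) =
    do {R \<leftarrow> Pi_pmf I False (\<lambda>_. bernoulli_pmf g); Z \<leftarrow> Pi_pmf I False (\<lambda>_. bernoulli_pmf \<phi>);
        Pi_pmf I None (\<lambda>i. return_pmf (risk_mark (R i) (Z i)))}"
    unfolding risk_status_pmf_def using assms by (simp add: Pi_pmf_bind[where d' = False])
  also have "\<dots> = do {R \<leftarrow> Pi_pmf I False (\<lambda>_. bernoulli_pmf g); Z \<leftarrow> Pi_pmf I False (\<lambda>_. bernoulli_pmf \<phi>);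
        return_pmf (\<lambda>i. risk_mark (R i) (Z i))}"
    using assms set_Pi_pmf_subset[OF assms, of False]
    by (intro bind_pmf_cong refl) (auto simp: fun_eq_iff risk_mark_def)
  finally show ?thesis .
qed

lemma expectation_inverse_logrank_variance_eq_0:
  assumes "finite I" "K \<subseteq> I" "pmf q (Some b) = 0"
  shows "measure_pmf.expectation (Pi_pmf I None (\<lambda>_. q)) (\<lambda>x. inverse_if_pos (logrank_variance A K x)) = 0"
proof (rule integral_eq_zero_AE, unfold AE_measure_pmf_iff, intro ballI)
  fix x
  assume "x \<in> set_pmf (Pi_pmf I None (\<lambda>_. q))"
  then have "x i \<in> set_pmf q" if "i \<in> I" for i
    using that assms(1) by (auto simp: set_Pi_pmf PiE_dflt_def)
  moreover have "Some b \<notin> set_pmf q"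
    using assms(3) by (simp add: set_pmf_iff)
  ultimately have "{i\<in>K. x i = Some b} = {}"
    using assms(2) by force
  then have "card {i\<in>K. x i = Some b} = 0"
    by (simp only: card.empty)
  then have "logrank_variance A K x = 0"
    by (cases b) (simp_all add: logrank_variance_def Let_def)
  then show "inverse_if_pos (logrank_variance A K x) = 0"
    by (simp add: inverse_if_pos_def)
qed

lemma nn_integral_inverse_logrank_variance_le:
  assumes "finite I" "K \<subseteq> I" "A \<subseteq> K" "0 < g" "g \<le> 1" "0 < \<phi>" "\<phi> < 1"
  shows "(\<integral>\<^sup>+x. inverse_if_pos (logrank_variance A K x) \<partial>Pi_pmf I None (\<lambda>_. risk_status_pmf g \<phi>))
     \<le> 4 / (g * \<phi> * (1 - \<phi>)) * (1 / (real (card A) + 1) + 1 / (real (card (K - A)) + 1))"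
proof -
  let ?R = "Pi_pmf I False (\<lambda>_. bernoulli_pmf g)"
  let ?Z = "Pi_pmf I False (\<lambda>_. bernoulli_pmf \<phi>)"
  define P where "P R = 1 / (real (card {i\<in>A. R i}) + 1) + 1 / (real (card {i\<in>K - A. R i}) + 1)" for R
  define Q where "Q R Z = (real (card {i\<in>K. R i}) + 1)
    * (1 / (real (card {i\<in>{i\<in>K. R i}. Z i}) + 1) + 1 / (real (card {i\<in>{i\<in>K. R i}. \<not> Z i}) + 1))" for R Z
  have P_nonneg: "0 \<le> P R" and Q_nonneg: "0 \<le> Q R Z" for R Z
    by (simp_all add: P_def Q_def)
  have integrable: "integrable (measure_pmf (Pi_pmf I False p)) f"
    for p :: "_ \<Rightarrow> bool pmf" and f :: "_ \<Rightarrow> real"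
    using assms(1) by (rule integrable_Pi_pmf_finite)
  have Q_le: "measure_pmf.expectation ?Z (Q R) \<le> 1 / (\<phi> * (1 - \<phi>))" for R
    unfolding Q_def using assms by (intro expectation_Pi_bernoulli_count_inverse_both_le) auto
  have P_le: "measure_pmf.expectation ?R P \<le> 1 / g * (1 / (real (card A) + 1) + 1 / (real (card (K - A)) + 1))"
    unfolding P_def using assms by (intro expectation_Pi_bernoulli_count_inverse_add_le) auto
  have "(\<integral>\<^sup>+x. inverse_if_pos (logrank_variance A K x) \<partial>Pi_pmf I None (\<lambda>_. risk_status_pmf g \<phi>))
      = (\<integral>\<^sup>+R. \<integral>\<^sup>+Z. inverse_if_pos (logrank_variance A K (\<lambda>i. risk_mark (R i) (Z i))) \<partial>?Z \<partial>?R)"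
    by (simp add: Pi_risk_status_pmf assms(1))
  also have "\<dots> \<le> (\<integral>\<^sup>+R. \<integral>\<^sup>+Z. 4 * P R * Q R Z \<partial>?Z \<partial>?R)"
    using inverse_if_pos_logrank_variance_le[OF finite_subset[OF assms(2,1)] assms(3)]
    by (intro nn_integral_mono ennreal_leI) (simp add: P_def Q_def)
  also have "\<dots> = (\<integral>\<^sup>+R. 4 * P R * measure_pmf.expectation ?Z (Q R) \<partial>?R)"
    by (intro nn_integral_cong) (simp add: nn_integral_eq_integral integrable P_nonneg Q_nonneg)
  also have "\<dots> \<le> (\<integral>\<^sup>+R. 4 * P R * (1 / (\<phi> * (1 - \<phi>))) \<partial>?R)"
    using Q_le P_nonneg by (intro nn_integral_mono ennreal_leI mult_left_mono) auto
  also have "\<dots> = 4 * measure_pmf.expectation ?R P * (1 / (\<phi> * (1 - \<phi>)))"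
    using assms by (simp add: nn_integral_eq_integral integrable P_nonneg)
  also have "\<dots> \<le> 4 * (1 / g * (1 / (real (card A) + 1) + 1 / (real (card (K - A)) + 1)))
                     * (1 / (\<phi> * (1 - \<phi>)))"
    using P_le assms by (intro ennreal_leI mult_right_mono mult_left_mono) auto
  finally show ?thesis
    by (simp add: mult.assoc)
qed

lemma expectation_inverse_logrank_variance_le:
  assumes "finite I" "K \<subseteq> I" "A \<subseteq> K" "0 \<le> g" "g \<le> 1" "0 \<le> \<phi>" "\<phi> \<le> 1"
  shows "measure_pmf.expectation (Pi_pmf I None (\<lambda>_. risk_status_pmf g \<phi>))
           (\<lambda>x. inverse_if_pos (logrank_variance A K x))
     \<le> 4 / (g * \<phi> * (1 - \<phi>)) * (1 / (real (card A) + 1) + 1 / (real (card (K - A)) + 1))"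
proof (cases "g * \<phi> * (1 - \<phi>) = 0")
  case True
  \<comment> \<open>The bound is then 0 (as \<open>x / 0 = 0\<close>); indeed one arm is never at risk, so V vanishes a.s.\<close>
  then obtain b where "pmf (risk_status_pmf g \<phi>) (Some b) = 0"
    using pmf_risk_status_pmf(1)[OF assms(4-7)] assms(6,7)
    by (metis mult_eq_0_iff pmf_bernoulli_False pmf_bernoulli_True)
  with assms(1,2) show ?thesis
    unfolding True by (simp add: expectation_inverse_logrank_variance_eq_0)
next
  case False
  with assms have "0 < g" "0 < \<phi>" "\<phi> < 1"
    by auto
  with assms have "(\<integral>\<^sup>+x. inverse_if_pos (logrank_variance A K x) \<partial>Pi_pmf I None (\<lambda>_. risk_status_pmf g \<phi>))
     \<le> 4 / (g * \<phi> * (1 - \<phi>)) * (1 / (real (card A) + 1) + 1 / (real (card (K - A)) + 1))"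
    by (intro nn_integral_inverse_logrank_variance_le)
  with \<open>0 < g\<close> \<open>0 < \<phi>\<close> \<open>\<phi> < 1\<close> show ?thesis
    by (subst integral_eq_nn_integral) (auto simp: inverse_if_pos_nonneg intro!: enn2real_leI)
qed

section \<open>Product measures with a discrete image\<close>

lemma measurable_PiM_count_space_countable:
  fixes F :: "('i \<Rightarrow> 'a :: countable) \<Rightarrow> 'b :: topological_space"
  assumes "finite I"
  shows "F \<in> borel_measurable (PiM I (\<lambda>_. count_space UNIV))"
proof (rule measurable_discrete_difference[where f = "\<lambda>_. undefined" and X = "space (PiM I (\<lambda>_. count_space UNIV))"])
  show "countable (space (PiM I (\<lambda>_. count_space (UNIV :: 'a set))))"
    unfolding space_PiM using assms by (intro countable_PiE) auto
  fix x
  assume "x \<in> space (PiM I (\<lambda>_. count_space (UNIV :: 'a set)))"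
  then have "{x} = PiE I (\<lambda>i. {x i})"
    unfolding space_PiM by (intro PiE_singleton[symmetric]) (auto simp: PiE_def)
  also have "\<dots> \<in> sets (PiM I (\<lambda>_. count_space UNIV))"
    using assms by (intro sets_PiM_I_finite) auto
  finally show "{x} \<in> sets (PiM I (\<lambda>_. count_space UNIV))" .
qed auto

lemma distr_Pi_pmf_restrict:
  assumes "finite I" "I \<noteq> {}"
  shows "distr (Pi_pmf I dflt (\<lambda>_. q)) (PiM I (\<lambda>_. count_space UNIV)) (\<lambda>x. restrict x I)
     = PiM I (\<lambda>_. measure_pmf q)"
proof -
  have "distr (Pi_pmf I dflt (\<lambda>_. q)) (PiM I (\<lambda>_. count_space UNIV)) (\<lambda>x. restrict x I)
     = PiM I (\<lambda>i. distr (Pi_pmf I dflt (\<lambda>_. q)) (count_space UNIV) (\<lambda>f. f i))"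
    using prob_space.indep_vars_iff_distr_eq_PiM'[OF measure_pmf.prob_space_axioms[of "Pi_pmf I dflt (\<lambda>_. q)"],
        where I = I and M' = "\<lambda>_. count_space UNIV" and X = "\<lambda>i f. f i"]
      indep_vars_Pi_pmf[OF assms(1), of dflt "\<lambda>_. q"] assms(2) by simp
  also have "\<dots> = PiM I (\<lambda>_. measure_pmf q)"
    using assms(1) by (intro PiM_cong) (simp_all add: map_pmf_rep_eq[symmetric] Pi_pmf_component)
  finally show ?thesis .
qed

lemma integral_PiM_compose_eq_Pi_pmf:
  fixes F :: "('i \<Rightarrow> 'a :: countable) \<Rightarrow> real"
  assumes I: "finite I" "I \<noteq> {}" and M: "prob_space M"
    and f: "f \<in> measurable M (count_space UNIV)" and distr_f: "distr M (count_space UNIV) f = measure_pmf q"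
    and F: "\<And>x y. (\<And>i. i \<in> I \<Longrightarrow> x i = y i) \<Longrightarrow> F x = F y"
  shows "(\<integral>\<omega>. F (\<lambda>i. f (\<omega> i)) \<partial>PiM I (\<lambda>_. M)) = measure_pmf.expectation (Pi_pmf I dflt (\<lambda>_. q)) F"
proof -
  let ?C = "PiM I (\<lambda>_. count_space (UNIV :: 'a set))"
  have F_measurable: "F \<in> borel_measurable ?C"
    using I(1) by (rule measurable_PiM_count_space_countable)
  have compose_measurable: "compose I f \<in> measurable (PiM I (\<lambda>_. M)) ?C"
    unfolding compose_def using f by (intro measurable_restrict measurable_compose[OF measurable_component_singleton])
  have distr_compose: "distr (PiM I (\<lambda>_. M)) ?C (compose I f) = PiM I (\<lambda>_. measure_pmf q)"
  proof -
    have "distr (PiM I (\<lambda>_. M)) ?C (compose I f)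
        = distr (PiM I (\<lambda>_. M)) (PiM I (\<lambda>_. measure_pmf q)) (compose I f)"
      by (rule distr_cong) (auto intro!: sets_PiM_cong)
    also have "\<dots> = PiM I (\<lambda>_. distr M (measure_pmf q) f)"
      using f by (intro distr_PiM_finite_prob_space' I(1) M measure_pmf.prob_space_axioms)
        (subst measurable_cong_sets[OF refl]; simp)
    also have "distr M (measure_pmf q) f = distr M (count_space UNIV) f"
      by (rule distr_cong) simp_all
    finally show ?thesis
      unfolding distr_f .
  qed
  have compose_eq: "F (compose I f \<omega>) = F (\<lambda>i. f (\<omega> i))" and restrict_eq: "F (restrict x I) = F x" for \<omega> x
    by (rule F, simp add: compose_def)+
  have "(\<integral>\<omega>. F (\<lambda>i. f (\<omega> i)) \<partial>PiM I (\<lambda>_. M)) = (\<integral>\<omega>. F (compose I f \<omega>) \<partial>PiM I (\<lambda>_. M))"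
    by (simp only: compose_eq)
  also have "\<dots> = (\<integral>x. F x \<partial>PiM I (\<lambda>_. measure_pmf q))"
    unfolding distr_compose[symmetric] by (rule integral_distr[symmetric, OF compose_measurable F_measurable])
  also have "\<dots> = (\<integral>x. F x \<partial>distr (Pi_pmf I dflt (\<lambda>_. q)) ?C (\<lambda>x. restrict x I))"
    using I by (simp add: distr_Pi_pmf_restrict)
  also have "\<dots> = (\<integral>x. F (restrict x I) \<partial>Pi_pmf I dflt (\<lambda>_. q))"
    using F_measurable by (intro integral_distr) (auto intro!: measurable_restrict simp: space_PiM)
  finally show ?thesis
    by (simp only: restrict_eq)
qed

section \<open>Risk status in the censoring model\<close>

definition risk_status :: "real \<Rightarrow> bool \<times> ennreal \<times> ennreal \<Rightarrow> bool option" where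
  "risk_status t u = risk_mark (ennreal t \<le> (if fst u then fst (snd u) else snd (snd u))) (fst u)"

lemma prob_space_unit_space: "prob_space \<mu> \<Longrightarrow> prob_space (unit_space p1 \<mu>)"
  unfolding unit_space_def by (intro prob_space_pair measure_pmf.prob_space_axioms)

lemma measurable_risk_status:
  assumes "sets \<mu> = sets borel"
  shows "risk_status t \<in> measurable (unit_space p1 \<mu>) (count_space UNIV)"
proof -
  have "sets (unit_space p1 \<mu>) = sets (count_space UNIV \<Otimes>\<^sub>M (borel \<Otimes>\<^sub>M (borel :: ennreal measure)))"
    unfolding unit_space_def borel_prod using assms by (intro sets_pair_measure_cong) simp_all
  then show ?thesis
    unfolding risk_status_def risk_mark_def by (subst measurable_cong_sets[OF _ refl]) (assumption, measurable)
qed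

lemma G1_G0_bounds:
  assumes "prob_space \<mu>"
  shows "0 \<le> G1 \<mu> c" "G1 \<mu> c \<le> 1" "0 \<le> G0 \<mu> c" "G0 \<mu> c \<le> 1"
  using prob_space.prob_le_1[OF assms] by (auto simp: G1_def G0_def)

lemma Gmix_phik_bounds:
  assumes "0 \<le> p1" "p1 \<le> 1" "prob_space \<mu>"
  shows "0 \<le> Gmix p1 \<mu> t" "Gmix p1 \<mu> t \<le> 1" "0 \<le> phik p1 \<mu> t" "phik p1 \<mu> t \<le> 1"
proof -
  have "0 \<le> p1 * G1 \<mu> t" "0 \<le> (1 - p1) * G0 \<mu> t" "p1 * G1 \<mu> t \<le> p1" "(1 - p1) * G0 \<mu> t \<le> 1 - p1"
    using assms G1_G0_bounds[OF assms(3)] by (auto intro: mult_left_le)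
  then show "0 \<le> Gmix p1 \<mu> t" "Gmix p1 \<mu> t \<le> 1" "0 \<le> phik p1 \<mu> t" "phik p1 \<mu> t \<le> 1"
    unfolding Gmix_def phik_def by (auto simp: divide_le_eq_1)
qed

lemma Gmix_mult_phik:
  assumes "0 \<le> p1" "p1 \<le> 1" "prob_space \<mu>"
  shows "Gmix p1 \<mu> t * phik p1 \<mu> t = p1 * G1 \<mu> t"
    and "Gmix p1 \<mu> t * (1 - phik p1 \<mu> t) = (1 - p1) * G0 \<mu> t"
proof -
  have "0 \<le> p1 * G1 \<mu> t" "0 \<le> (1 - p1) * G0 \<mu> t"
    using assms G1_G0_bounds[OF assms(3)] by auto
  then have "Gmix p1 \<mu> t * phik p1 \<mu> t = p1 * G1 \<mu> t"
    unfolding Gmix_def phik_def by (cases "p1 * G1 \<mu> t + (1 - p1) * G0 \<mu> t = 0") (auto simp: add_nonneg_eq_0_iff)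
  then show "Gmix p1 \<mu> t * phik p1 \<mu> t = p1 * G1 \<mu> t"
    and "Gmix p1 \<mu> t * (1 - phik p1 \<mu> t) = (1 - p1) * G0 \<mu> t"
    by (simp_all add: right_diff_distrib Gmix_def)
qed

lemma distr_risk_status:
  assumes "0 \<le> p1" "p1 \<le> 1" "prob_space \<mu>" "sets \<mu> = sets borel"
  shows "distr (unit_space p1 \<mu>) (count_space UNIV) (risk_status t)
       = measure_pmf (risk_status_pmf (Gmix p1 \<mu> t) (phik p1 \<mu> t))"
proof (rule measure_eqI_countable[where A = UNIV])
  fix k :: "bool option"
  interpret \<mu>: prob_space \<mu>
    by (rule assms(3))
  let ?U = "unit_space p1 \<mu>"
  let ?S = "\<lambda>z. {c. risk_status t (z, c) = k}"
  have space_\<mu>: "space \<mu> = UNIV"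
    using sets_eq_imp_space_eq[OF assms(4)] by simp
  have space_U: "space ?U = UNIV"
    unfolding unit_space_def by (simp add: space_pair_measure space_\<mu>)
  have "risk_status t -` {k} \<inter> space ?U \<in> sets ?U"
    by (rule measurable_sets[OF measurable_risk_status[OF assms(4)]]) simp
  then have preimage: "risk_status t -` {k} \<in> sets ?U"
    by (simp add: space_U)
  then have S_sets: "?S z \<in> sets \<mu>" for z
    using sets_Pair1[of "risk_status t -` {k}"] unfolding unit_space_def by (auto simp: vimage_def)
  have "emeasure (distr ?U (count_space UNIV) (risk_status t)) {k} = emeasure ?U (risk_status t -` {k})"
    using measurable_risk_status[OF assms(4)] by (simp add: emeasure_distr space_U)
  also have "\<dots> = (\<integral>\<^sup>+z. emeasure \<mu> (?S z) \<partial>bernoulli_pmf p1)"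
    using preimage unfolding unit_space_def
    by (subst \<mu>.emeasure_pair_measure_alt) (auto simp: vimage_def intro!: nn_integral_cong)
  also have "\<dots> = ennreal (p1 * measure \<mu> (?S True) + (1 - p1) * measure \<mu> (?S False))"
    using assms(1,2) by (simp add: \<mu>.emeasure_eq_measure ennreal_mult' ennreal_plus[symmetric] mult.commute)
  also have "p1 * measure \<mu> (?S True) + (1 - p1) * measure \<mu> (?S False)
      = pmf (risk_status_pmf (Gmix p1 \<mu> t) (phik p1 \<mu> t)) k"
  proof (cases k)
    case None
    have "?S z = space \<mu> - {c. ennreal t \<le> (if z then fst c else snd c)}" for z
      by (auto simp: None risk_status_def risk_mark_def space_\<mu> split: if_splits)
    moreover have "{c. ennreal t \<le> (if z then fst c else snd c)} \<in> sets \<mu>" for z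
      unfolding assms(4) by (cases z) (auto intro!: borel_closed closed_Collect_le continuous_intros)
    ultimately have "measure \<mu> (?S z) = 1 - measure \<mu> {c. ennreal t \<le> (if z then fst c else snd c)}" for z
      by (simp add: \<mu>.prob_compl)
    from this[of True] this[of False]
    have S_measure: "measure \<mu> (?S True) = 1 - G1 \<mu> t" "measure \<mu> (?S False) = 1 - G0 \<mu> t"
      by (simp_all add: G1_def G0_def space_\<mu>)
    show ?thesis
      unfolding S_measure using Gmix_phik_bounds[OF assms(1-3), of t]
      by (simp add: None pmf_risk_status_pmf Gmix_def algebra_simps)
  next
    case (Some w)
    have "?S z = (if z = w then {c. ennreal t \<le> (if z then fst c else snd c)} else {})" for z
      by (auto simp: Some risk_status_def risk_mark_def)
    then show ?thesis
      using Gmix_phik_bounds[OF assms(1-3), of t] Gmix_mult_phik[OF assms(1-3), of t]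
      by (cases w) (simp_all add: Some pmf_risk_status_pmf G1_def G0_def space_\<mu> algebra_simps)
  qed
  finally show "emeasure (distr ?U (count_space UNIV) (risk_status t)) {k}
      = emeasure (measure_pmf (risk_status_pmf (Gmix p1 \<mu> t) (phik p1 \<mu> t))) {k}"
    by (simp add: emeasure_pmf_single)
qed auto

section \<open>The log-rank variance under the null hypothesis\<close>

lemma Vk_eq_logrank_variance:
  assumes "\<forall>i<n. 0 \<le> T0 i" "\<forall>i<n. T1 i = T0 i" "0 \<le> t"
  shows "Vk n T1 T0 t \<omega>
       = logrank_variance {i. i < n \<and> T0 i = t} {i. i < n \<and> t \<le> T0 i} (\<lambda>i. risk_status t (\<omega> i))"
proof -
  have status: "risk_status t (\<omega> i) = risk_mark (ennreal t \<le> Cr \<omega> i) (Zr \<omega> i)" for i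
    by (simp add: risk_status_def Cr_def Zr_def)
  have T: "Tr T1 T0 \<omega> i = T0 i" if "i < n" for i
    using assms(2) that by (simp add: Tr_def)
  have at_risk: "ennreal t \<le> Wr T1 T0 \<omega> i \<longleftrightarrow> t \<le> T0 i \<and> ennreal t \<le> Cr \<omega> i" if "i < n" for i
    using assms(1) that by (simp add: Wr_def T)
  have event: "Deltar T1 T0 \<omega> i \<and> Wr T1 T0 \<omega> i = ennreal t \<longleftrightarrow> T0 i = t \<and> ennreal t \<le> Cr \<omega> i"
    if "i < n" for i
    using assms(1,3) that by (auto simp: Deltar_def Wr_def T min_def)
  have "{i. i < n \<and> Zr \<omega> i \<and> ennreal t \<le> Wr T1 T0 \<omega> i}
      = {i\<in>{i. i < n \<and> t \<le> T0 i}. risk_status t (\<omega> i) = Some True}"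
    "{i. i < n \<and> \<not> Zr \<omega> i \<and> ennreal t \<le> Wr T1 T0 \<omega> i}
      = {i\<in>{i. i < n \<and> t \<le> T0 i}. risk_status t (\<omega> i) = Some False}"
    "{i. i < n \<and> Deltar T1 T0 \<omega> i \<and> Wr T1 T0 \<omega> i = ennreal t}
      = {i\<in>{i. i < n \<and> T0 i = t}. risk_status t (\<omega> i) \<noteq> None}"
    using at_risk event by (auto simp: status risk_mark_def)
  then show ?thesis
    unfolding Vk_def logrank_variance_def N1_def N0_def Dk_def by simp
qed

lemma hazard_bound_factor_eq:
  fixes d N :: real
  assumes "0 \<le> d" "d \<le> N" "0 < N"
  shows "(1 + 2 / N) / ((d / N + 1 / N) * (1 - d / N + 1 / N)) * (1 / N) = 1 / (d + 1) + 1 / (N - d + 1)"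
proof -
  have nonzero: "d + 1 \<noteq> 0" "N - d + 1 \<noteq> 0" "N \<noteq> 0"
    using assms by auto
  have parts: "d / N + 1 / N = (d + 1) / N" "1 - d / N + 1 / N = (N - d + 1) / N" "1 + 2 / N = (N + 2) / N"
    using nonzero by (simp_all add: field_simps)
  have "(a / N) / ((b / N) * (c / N)) * (1 / N) = a / (b * c)" if "b \<noteq> 0" "c \<noteq> 0" for a b c :: real
    using that nonzero by (simp add: field_simps)
  then have "(1 + 2 / N) / ((d / N + 1 / N) * (1 - d / N + 1 / N)) * (1 / N) = (N + 2) / ((d + 1) * (N - d + 1))"
    unfolding parts using nonzero by blast
  also have "\<dots> = 1 / (d + 1) + 1 / (N - d + 1)"
    using nonzero by (simp add: field_simps)
  finally show ?thesis .
qed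

lemma integral_inverse_Vk_eq_expectation:
  assumes "0 \<le> p1" "p1 \<le> 1" "prob_space \<mu>" "sets \<mu> = sets borel"
    and "\<forall>i<n. 0 \<le> T0 i" "\<forall>i<n. T1 i = T0 i" "0 \<le> t" "0 < n"
  shows "(\<integral>\<omega>. inverse_if_pos (Vk n T1 T0 t \<omega>) \<partial>sample_space n p1 \<mu>)
       = measure_pmf.expectation (Pi_pmf {..<n} None (\<lambda>_. risk_status_pmf (Gmix p1 \<mu> t) (phik p1 \<mu> t)))
           (\<lambda>x. inverse_if_pos (logrank_variance {i. i < n \<and> T0 i = t} {i. i < n \<and> t \<le> T0 i} x))"
  unfolding sample_space_def Vk_eq_logrank_variance[OF assms(5-7)] using assms(1-4,8)
  by (intro integral_PiM_compose_eq_Pi_pmf measurable_risk_status distr_risk_status prob_space_unit_space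
      arg_cong[where f = inverse_if_pos] logrank_variance_cong) auto

lemma hazard_bound_factor_nk_hk_eq:
  assumes "t \<in> T0 ` {..<n}"
  shows "(1 + 2 / real (nk n T0 t)) / ((hk n T0 t + 1 / real (nk n T0 t)) * (1 - hk n T0 t + 1 / real (nk n T0 t)))
           * (1 / real (nk n T0 t))
       = 1 / (real (card {i. i < n \<and> T0 i = t}) + 1)
         + 1 / (real (card ({i. i < n \<and> t \<le> T0 i} - {i. i < n \<and> T0 i = t})) + 1)"
proof -
  define A where "A = {i. i < n \<and> T0 i = t}"
  define K where "K = {i. i < n \<and> t \<le> T0 i}"
  have "A \<subseteq> K" "finite K" "A \<noteq> {}"
    using assms by (auto simp: A_def K_def)
  then have "card A \<le> card K" "0 < card A"
    by (auto simp: card_mono card_gt_0_iff intro: finite_subset)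
  moreover have "real (card (K - A)) = real (card K) - real (card A)"
    using \<open>A \<subseteq> K\<close> finite_subset[OF \<open>A \<subseteq> K\<close> \<open>finite K\<close>] \<open>card A \<le> card K\<close>
    by (simp add: card_Diff_subset of_nat_diff)
  moreover have "real (nk n T0 t) = real (card K)" "hk n T0 t = real (card A) / real (card K)"
    by (simp_all add: hk_def dk_def nk_def A_def K_def)
  ultimately show ?thesis
    using hazard_bound_factor_eq[of "real (card A)" "real (card K)"] unfolding A_def[symmetric] K_def[symmetric]
    by simp
qed

theorem lemmaA14:
  fixes n :: nat and p1 :: real and \<mu> :: "(ennreal \<times> ennreal) measure"
    and T1 T0 :: "nat \<Rightarrow> real" and t :: real
  assumes "0 < p1" and "p1 < 1"
    and "prob_space \<mu>" and "sets \<mu> = sets borel"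
    and "\<forall>i<n. 0 \<le> T0 i" and "\<forall>i<n. 0 \<le> T1 i"
    and H0: "\<forall>i<n. T1 i = T0 i"
    and "t \<in> T0 ` {..<n}"
  shows "(\<integral>\<omega>. (if Vk n T1 T0 t \<omega> > 0 then 1 / Vk n T1 T0 t \<omega> else 0) \<partial>sample_space n p1 \<mu>)
     \<le> 16 / (Gmix p1 \<mu> t * phik p1 \<mu> t * (1 - phik p1 \<mu> t))
        * ((1 + 2 / real (nk n T0 t))
           / ((hk n T0 t + 1 / real (nk n T0 t)) * (1 - hk n T0 t + 1 / real (nk n T0 t))))
        * (1 / real (nk n T0 t))"
proof -
  define A where "A = {i. i < n \<and> T0 i = t}"
  define K where "K = {i. i < n \<and> t \<le> T0 i}"
  let ?g = "Gmix p1 \<mu> t" and ?\<phi> = "phik p1 \<mu> t"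
  have "0 \<le> t" "0 < n"
    using assms(5,8) by auto
  have bounds: "0 \<le> ?g" "?g \<le> 1" "0 \<le> ?\<phi>" "?\<phi> \<le> 1"
    using Gmix_phik_bounds[OF _ _ assms(3)] assms(1,2) by auto
  have "(\<integral>\<omega>. (if Vk n T1 T0 t \<omega> > 0 then 1 / Vk n T1 T0 t \<omega> else 0) \<partial>sample_space n p1 \<mu>)
      = measure_pmf.expectation (Pi_pmf {..<n} None (\<lambda>_. risk_status_pmf ?g ?\<phi>))
          (\<lambda>x. inverse_if_pos (logrank_variance A K x))"
    using integral_inverse_Vk_eq_expectation[OF _ _ assms(3-5) H0 \<open>0 \<le> t\<close> \<open>0 < n\<close>] assms(1,2)
    unfolding A_def K_def inverse_if_pos_def by simp
  also have "\<dots> \<le> 4 / (?g * ?\<phi> * (1 - ?\<phi>)) * (1 / (real (card A) + 1) + 1 / (real (card (K - A)) + 1))"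
    using bounds by (intro expectation_inverse_logrank_variance_le) (auto simp: A_def K_def)
  also have "\<dots> \<le> 16 / (?g * ?\<phi> * (1 - ?\<phi>)) * (1 / (real (card A) + 1) + 1 / (real (card (K - A)) + 1))"
    using bounds by (intro mult_right_mono divide_right_mono) auto
  finally show ?thesis
    unfolding mult.assoc hazard_bound_factor_nk_hk_eq[OF assms(8)] A_def K_def .
qed

end
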